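(* Let $G$ be a finite group, $A\subset G$, $K>0$, $l$ a positive integer with $\mathbb{P}_G(A^l)\le K\,\mathbb{P}_G(A^{l-1})$, and $\epsilon\in(0,1]$. Then $$AA^{-1}\subset\operatorname{LinBohr}(\operatorname{LSpec}(A^l,\epsilon),2\epsilon\sqrt{2K}).$$
   Context: $A^l$ is the $l$-fold product set ($A^0:=\{1_G\}$), $AA^{-1}=\{ab^{-1}:a,b\in A\}$, $\mathbb{P}_G(E)=|E|/|G|$. $\operatorname{Lin}(G)$ is the set of homomorphisms $G\to S^1$; for $B\subset G$, $\widehat{1_B}(\gamma):=\mathbb{E}_{x\in G}1_B(x)\gamma(x)$ and $\operatorname{LSpec}(B,\eta):=\{\gamma\in\operatorname{Lin}(G):|\widehat{1_B}(\gamma)|\ge\sqrt{1-\eta^2/2}\,\mathbb{P}_G(B)\}$. For $z\in S^1$, $\|z\|:=(2\pi)^{-1}|\operatorname{Arg}z|$ with $\operatorname{Arg}z\in(-\pi,\pi]$, and $\operatorname{LinBohr}(\Lambda,\delta):=\{x\in G:\|\gamma(x)\|\le\delta\ \forall\gamma\in\Lambda\}$. *)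

theory Defs
  imports "HOL-Analysis.Analysis" "HOL-Algebra.Group"
begin

fun setpow :: "('a, 'b) monoid_scheme \<Rightarrow> 'a set \<Rightarrow> nat \<Rightarrow> 'a set" where
  "setpow G A 0 = {\<one>\<^bsub>G\<^esub>}"
| "setpow G A (Suc n) = {x \<otimes>\<^bsub>G\<^esub> a | x a. x \<in> setpow G A n \<and> a \<in> A}"

definition diffset :: "('a, 'b) monoid_scheme \<Rightarrow> 'a set \<Rightarrow> 'a set" where
  "diffset G A = {a \<otimes>\<^bsub>G\<^esub> inv\<^bsub>G\<^esub> b | a b. a \<in> A \<and> b \<in> A}"

definition prob_G :: "('a, 'b) monoid_scheme \<Rightarrow> 'a set \<Rightarrow> real" where
  "prob_G G E = real (card E) / real (card (carrier G))"

text \<open>Homomorphisms G \<rightarrow> S^1 (values outside the carrier irrelevant).\<close>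
definition Lin :: "('a, 'b) monoid_scheme \<Rightarrow> ('a \<Rightarrow> complex) set" where
  "Lin G = {\<gamma>. (\<forall>x\<in>carrier G. cmod (\<gamma> x) = 1) \<and>
               (\<forall>x\<in>carrier G. \<forall>y\<in>carrier G. \<gamma> (x \<otimes>\<^bsub>G\<^esub> y) = \<gamma> x * \<gamma> y)}"

definition fourier_ind :: "('a, 'b) monoid_scheme \<Rightarrow> 'a set \<Rightarrow> ('a \<Rightarrow> complex) \<Rightarrow> complex" where
  "fourier_ind G B \<gamma> = (\<Sum>x\<in>carrier G. (if x \<in> B then \<gamma> x else 0)) / of_nat (card (carrier G))"

definition LSpec :: "('a, 'b) monoid_scheme \<Rightarrow> 'a set \<Rightarrow> real \<Rightarrow> ('a \<Rightarrow> complex) set" where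
  "LSpec G B \<eta> = {\<gamma> \<in> Lin G. cmod (fourier_ind G B \<gamma>) \<ge> sqrt (1 - \<eta>^2 / 2) * prob_G G B}"

definition circ_norm :: "complex \<Rightarrow> real" where
  "circ_norm z = \<bar>Arg z\<bar> / (2 * pi)"

definition LinBohr :: "('a, 'b) monoid_scheme \<Rightarrow> ('a \<Rightarrow> complex) set \<Rightarrow> real \<Rightarrow> 'a set" where
  "LinBohr G \<Lambda> \<delta> = {x \<in> carrier G. \<forall>\<gamma>\<in>\<Lambda>. circ_norm (\<gamma> x) \<le> \<delta>}"

end

theory Submission
  imports Defs
begin

text \<open>
  A character \<gamma> in the large spectrum of B = A^l is L^2-close on B to a single unit \<omega>:
  the sum of |\<gamma> y - \<omega>|^2 over y \<in> B is at most \<epsilon>^2 |B|. For c \<in> A the translate A^(l-1) c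
  lies in B, so \<gamma> x \<gamma> c is close to \<omega> on average over x \<in> A^(l-1); comparing c = a with
  c = b gives |A^(l-1)| |\<gamma> a - \<gamma> b|^2 \<le> 4 \<epsilon>^2 |B| \<le> 4 \<epsilon>^2 K |A^(l-1)|. Finally
  |\<gamma> (a b^-1) - 1| = |\<gamma> a - \<gamma> b|, and the circle norm of a unit z is at most |z - 1|.
\<close>

lemma sin_ge_third:
  fixes x :: real
  assumes "0 \<le> x" "x \<le> 2"
  shows "x / 3 \<le> sin x"
proof -
  have "\<bar>sin x - (\<Sum>m<3. sin_coeff m * x ^ m)\<bar> \<le> inverse (fact 3) * \<bar>x\<bar> ^ 3"
    by (rule Maclaurin_sin_bound)
  moreover have "(\<Sum>m<3. sin_coeff m * x ^ m) = x"
    by (simp add: numeral_3_eq_3 sin_coeff_def)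
  ultimately have "\<bar>sin x - x\<bar> \<le> x^3 / 6"
    using assms by (simp add: fact_numeral)
  then have "x - x^3 / 6 \<le> sin x" by linarith
  moreover have "x^3 \<le> 4 * x"
  proof -
    have "x^2 \<le> 2^2" using assms by (intro power_mono) auto
    then have "x * x^2 \<le> x * 4" using assms by (intro mult_left_mono) auto
    then show ?thesis by (simp add: power3_eq_cube power2_eq_square mult.commute)
  qed
  ultimately show ?thesis by linarith
qed

lemma circ_norm_le_norm_diff_one:
  assumes "cmod z = 1"
  shows "circ_norm z \<le> cmod (z - 1)"
proof -
  define t where "t = Arg z"
  have z: "z = exp (\<i> * of_real t)"
    using assms complex_norm_eq_1_exp_eq t_def by metis
  have t: "\<bar>t\<bar> \<le> pi"
    using mpi_less_Arg[of z] Arg_le_pi[of z] by (simp add: t_def abs_le_iff)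
  have "\<bar>t\<bar> / (2 * pi) \<le> \<bar>t\<bar> / 3"
    using pi_gt3 by (intro divide_left_mono) auto
  also have "\<dots> \<le> 2 * sin (\<bar>t\<bar> / 2)"
    using sin_ge_third[of "\<bar>t\<bar> / 2"] t pi_less_4 by auto
  also have "sin (\<bar>t\<bar> / 2) = \<bar>sin (t / 2)\<bar>"
    using sin_ge_zero[of "\<bar>t\<bar> / 2"] t by (cases "t \<ge> 0") auto
  also have "2 * \<bar>sin (t / 2)\<bar> = cmod (z - 1)"
    by (simp add: z dist_exp_i_1)
  finally show ?thesis by (simp add: circ_norm_def t_def)
qed

context group
begin

lemma Lin_norm: "\<gamma> \<in> Lin G \<Longrightarrow> x \<in> carrier G \<Longrightarrow> cmod (\<gamma> x) = 1"
  by (simp add: Lin_def)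

lemma Lin_mult: "\<gamma> \<in> Lin G \<Longrightarrow> x \<in> carrier G \<Longrightarrow> y \<in> carrier G \<Longrightarrow> \<gamma> (x \<otimes> y) = \<gamma> x * \<gamma> y"
  by (simp add: Lin_def)

lemma Lin_mult_cnj: "\<gamma> \<in> Lin G \<Longrightarrow> x \<in> carrier G \<Longrightarrow> \<gamma> x * cnj (\<gamma> x) = 1"
  by (simp add: complex_mult_cnj cmod_power2[symmetric] Lin_norm)

lemma Lin_inv:
  assumes "\<gamma> \<in> Lin G" "x \<in> carrier G"
  shows "\<gamma> (inv x) = cnj (\<gamma> x)"
proof -
  have "\<gamma> \<one> = \<gamma> \<one> * \<gamma> \<one>" and "\<gamma> \<one> \<noteq> 0"
    using Lin_mult[OF assms(1), of \<one> \<one>] Lin_norm[OF assms(1), of \<one>] by auto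
  then have "\<gamma> \<one> = 1" by simp
  then have "\<gamma> x * \<gamma> (inv x) = \<gamma> x * cnj (\<gamma> x)"
    using Lin_mult[OF assms(1) assms(2), of "inv x"] Lin_mult_cnj[OF assms] assms(2) by simp
  moreover have "\<gamma> x \<noteq> 0" using Lin_norm[OF assms] by auto
  ultimately show ?thesis by simp
qed

lemma Lin_norm_diff_one:
  assumes "\<gamma> \<in> Lin G" "a \<in> carrier G" "b \<in> carrier G"
  shows "cmod (\<gamma> (a \<otimes> inv b) - 1) = cmod (\<gamma> a - \<gamma> b)"
proof -
  have "\<gamma> (a \<otimes> inv b) - 1 = (\<gamma> a - \<gamma> b) * cnj (\<gamma> b)"
    using assms Lin_mult_cnj[OF assms(1,3)] by (simp add: Lin_mult Lin_inv algebra_simps)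
  then show ?thesis using assms by (simp add: norm_mult Lin_norm)
qed

lemma setpow_subset_carrier: "A \<subseteq> carrier G \<Longrightarrow> setpow G A n \<subseteq> carrier G"
  by (induction n) auto

end

lemma setpow_nonempty: "A \<noteq> {} \<Longrightarrow> setpow G A n \<noteq> {}"
  by (induction n) auto

lemma norm_diff_sq_le:
  fixes p q w :: "'a :: real_normed_vector"
  shows "(norm (p - q))^2 \<le> 2 * (norm (p - w))^2 + 2 * (norm (q - w))^2"
proof -
  have "norm (p - q) \<le> norm (p - w) + norm (q - w)"
    using norm_triangle_ineq4[of "p - w" "q - w"] by simp
  then have "(norm (p - q))^2 \<le> (norm (p - w) + norm (q - w))^2"
    by (intro power_mono) auto
  also have "\<dots> \<le> 2 * (norm (p - w))^2 + 2 * (norm (q - w))^2"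
    using sum_squares_ge_zero[of "norm (p - w) - norm (q - w)" 0]
    by (simp add: power2_eq_square algebra_simps)
  finally show ?thesis .
qed

lemma norm_diff_sq_unit:
  assumes "cmod u = 1" "cmod w = 1"
  shows "(cmod (u - w))^2 = 2 - 2 * Re (u * cnj w)"
proof -
  have "(cmod (u - w))^2 = (cmod u)^2 + (cmod w)^2 - 2 * Re (u * cnj w)"
    unfolding cmod_power2 by (simp add: power2_eq_square algebra_simps)
  then show ?thesis using assms by simp
qed

lemma exists_unit_sum_norm_diff_sq:
  fixes f :: "'a \<Rightarrow> complex"
  assumes "\<And>y. y \<in> B \<Longrightarrow> cmod (f y) = 1"
  shows "\<exists>\<omega>. cmod \<omega> = 1 \<and>
           (\<Sum>y\<in>B. (cmod (f y - \<omega>))^2) = 2 * card B - 2 * cmod (\<Sum>y\<in>B. f y)"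
proof -
  define S where "S = (\<Sum>y\<in>B. f y)"
  define \<omega> where "\<omega> = (if S = 0 then 1 else S / cmod S)"
  have unit: "cmod \<omega> = 1" by (simp add: \<omega>_def norm_divide)
  have "Re (S * cnj \<omega>) = cmod S"
  proof (cases "S = 0")
    case False
    have "S * cnj S = of_real ((cmod S)^2)" by (rule complex_norm_square[symmetric])
    then have "S * cnj \<omega> = of_real ((cmod S)^2 / cmod S)"
      using False by (simp add: \<omega>_def)
    then show ?thesis by (simp add: power2_eq_square)
  qed (simp add: \<omega>_def)
  moreover have "(\<Sum>y\<in>B. (cmod (f y - \<omega>))^2) = (\<Sum>y\<in>B. 2 - 2 * Re (f y * cnj \<omega>))"
    using assms unit by (intro sum.cong refl norm_diff_sq_unit) auto
  moreover have "\<dots> = 2 * card B - 2 * Re (S * cnj \<omega>)"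
    by (simp add: sum_subtractf S_def sum_distrib_right sum_distrib_left)
  ultimately show ?thesis using unit by (auto simp: S_def)
qed

lemma sqrt_one_minus_ge: "0 \<le> s \<Longrightarrow> s \<le> 1 \<Longrightarrow> 1 - s \<le> sqrt (1 - s)"
  by (intro real_le_rsqrt) (simp add: power2_eq_square mult_left_le)

context group
begin

lemma LSpec_concentration:
  assumes "finite (carrier G)" "B \<subseteq> carrier G" "\<gamma> \<in> LSpec G B \<epsilon>" "\<epsilon>^2 \<le> 2"
  shows "\<exists>\<omega>. (\<Sum>y\<in>B. (cmod (\<gamma> y - \<omega>))^2) \<le> \<epsilon>^2 * card B"
proof -
  define S where "S = (\<Sum>y\<in>B. \<gamma> y)"
  have Lin: "\<gamma> \<in> Lin G" using assms(3) by (simp add: LSpec_def)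
  have "card (carrier G) > 0" using assms(1) carrier_not_empty card_gt_0_iff by blast
  moreover have "fourier_ind G B \<gamma> = S / card (carrier G)"
    using assms(2) by (simp add: fourier_ind_def S_def sum.If_cases[OF assms(1)] Int_absorb1)
  ultimately have "cmod (fourier_ind G B \<gamma>) = cmod S / card (carrier G)"
    by (simp add: norm_divide)
  then have S: "sqrt (1 - \<epsilon>^2 / 2) * card B \<le> cmod S"
    using assms(3) \<open>card (carrier G) > 0\<close> by (simp add: LSpec_def prob_G_def divide_simps)
  obtain \<omega> where "(\<Sum>y\<in>B. (cmod (\<gamma> y - \<omega>))^2) = 2 * card B - 2 * cmod S"
    using exists_unit_sum_norm_diff_sq[of B \<gamma>] assms(2) Lin_norm[OF Lin] S_def by blast
  also have "\<dots> \<le> 2 * card B * (1 - sqrt (1 - \<epsilon>^2 / 2))"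
    using S by (simp add: algebra_simps)
  also have "\<dots> \<le> 2 * card B * (\<epsilon>^2 / 2)"
    using sqrt_one_minus_ge[of "\<epsilon>^2 / 2"] assms(4) by (intro mult_left_mono) auto
  finally show ?thesis by (auto simp: mult.commute)
qed

lemma Lin_translate_sum_le:
  assumes "\<gamma> \<in> Lin G" "X \<subseteq> carrier G" "c \<in> carrier G" "finite Y" "(\<lambda>x. x \<otimes> c) ` X \<subseteq> Y"
  shows "(\<Sum>x\<in>X. (cmod (\<gamma> x * \<gamma> c - \<omega>))^2) \<le> (\<Sum>y\<in>Y. (cmod (\<gamma> y - \<omega>))^2)"
proof -
  have "inj_on (\<lambda>x. x \<otimes> c) X"
    using assms(2,3) by (intro inj_onI) (metis right_cancel subsetD)
  then have "(\<Sum>x\<in>X. (cmod (\<gamma> x * \<gamma> c - \<omega>))^2) = (\<Sum>y\<in>(\<lambda>x. x \<otimes> c) ` X. (cmod (\<gamma> y - \<omega>))^2)"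
    using assms(1-3) by (simp add: sum.reindex Lin_mult subsetD)
  also have "\<dots> \<le> (\<Sum>y\<in>Y. (cmod (\<gamma> y - \<omega>))^2)"
    using assms(4,5) by (intro sum_mono2) auto
  finally show ?thesis .
qed

lemma Lin_variation_le:
  assumes "\<gamma> \<in> Lin G" "X \<subseteq> carrier G" "A \<subseteq> carrier G" "a \<in> A" "b \<in> A"
    and "finite Y" "{x \<otimes> c | x c. x \<in> X \<and> c \<in> A} \<subseteq> Y"
  shows "card X * (cmod (\<gamma> a - \<gamma> b))^2 \<le> 4 * (\<Sum>y\<in>Y. (cmod (\<gamma> y - \<omega>))^2)"
proof -
  have translate: "(\<Sum>x\<in>X. (cmod (\<gamma> x * \<gamma> c - \<omega>))^2) \<le> (\<Sum>y\<in>Y. (cmod (\<gamma> y - \<omega>))^2)"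
    if "c \<in> A" for c
    using that assms by (intro Lin_translate_sum_le) blast+
  have "card X * (cmod (\<gamma> a - \<gamma> b))^2 = (\<Sum>x\<in>X. (cmod (\<gamma> x * \<gamma> a - \<gamma> x * \<gamma> b))^2)"
    using assms(1,2) by (simp add: right_diff_distrib[symmetric] norm_mult Lin_norm subsetD)
  also have "\<dots> \<le> (\<Sum>x\<in>X. 2 * (cmod (\<gamma> x * \<gamma> a - \<omega>))^2 + 2 * (cmod (\<gamma> x * \<gamma> b - \<omega>))^2)"
    by (intro sum_mono norm_diff_sq_le)
  also have "\<dots> \<le> 4 * (\<Sum>y\<in>Y. (cmod (\<gamma> y - \<omega>))^2)"
    using translate[OF assms(4)] translate[OF assms(5)]
    by (simp add: sum.distrib sum_distrib_left[symmetric])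
  finally show ?thesis .
qed

lemma LSpec_setpow_norm_diff_le:
  fixes \<epsilon> :: real
  assumes "finite (carrier G)" "A \<subseteq> carrier G" "a \<in> A" "b \<in> A"
    and "\<gamma> \<in> LSpec G (setpow G A (Suc m)) \<epsilon>" "\<epsilon>^2 \<le> 2"
  shows "card (setpow G A m) * (cmod (\<gamma> a - \<gamma> b))^2 \<le> 4 * \<epsilon>^2 * card (setpow G A (Suc m))"
proof -
  have sub: "setpow G A (Suc m) \<subseteq> carrier G"
    using assms(2) by (rule setpow_subset_carrier)
  obtain \<omega> where \<omega>: "(\<Sum>y\<in>setpow G A (Suc m). (cmod (\<gamma> y - \<omega>))^2) \<le> \<epsilon>^2 * card (setpow G A (Suc m))"
    using LSpec_concentration[OF assms(1) sub assms(5,6)] by blast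
  have "card (setpow G A m) * (cmod (\<gamma> a - \<gamma> b))^2
        \<le> 4 * (\<Sum>y\<in>setpow G A (Suc m). (cmod (\<gamma> y - \<omega>))^2)"
    using assms sub by (intro Lin_variation_le setpow_subset_carrier)
      (auto simp: LSpec_def intro: finite_subset)
  with \<omega> show ?thesis by simp
qed

lemma LSpec_setpow_norm_diff_le_sqrt:
  fixes \<epsilon> K :: real
  assumes "finite (carrier G)" "A \<subseteq> carrier G" "a \<in> A" "b \<in> A"
    and "\<gamma> \<in> LSpec G (setpow G A (Suc m)) \<epsilon>" "0 \<le> \<epsilon>" "\<epsilon>^2 \<le> 2"
    and "card (setpow G A (Suc m)) \<le> K * card (setpow G A m)"
  shows "cmod (\<gamma> a - \<gamma> b) \<le> 2 * \<epsilon> * sqrt K"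
proof -
  have pos: "card (setpow G A m) > 0"
    using setpow_nonempty[of A G m] setpow_subset_carrier[OF assms(2)] assms(1,3)
    by (metis card_gt_0_iff empty_iff finite_subset)
  have "0 \<le> K * card (setpow G A m)"
    using assms(8) by (meson of_nat_0_le_iff order_trans)
  with pos have K: "K \<ge> 0" by (simp add: zero_le_mult_iff)
  have "card (setpow G A m) * (cmod (\<gamma> a - \<gamma> b))^2 \<le> 4 * \<epsilon>^2 * card (setpow G A (Suc m))"
    using LSpec_setpow_norm_diff_le[OF assms(1-5,7)] .
  also have "\<dots> \<le> 4 * \<epsilon>^2 * (K * card (setpow G A m))"
    using assms(8) by (rule mult_left_mono) simp
  also have "\<dots> = card (setpow G A m) * (2 * \<epsilon> * sqrt K)^2"
    using K by (simp add: power_mult_distrib)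
  finally have "(cmod (\<gamma> a - \<gamma> b))^2 \<le> (2 * \<epsilon> * sqrt K)^2"
    using pos by simp
  then show ?thesis
    by (rule power2_le_imp_le) (use assms(6) K in simp)
qed

end

theorem proposition8p1:
  fixes G (structure) and A :: "'a set" and K \<epsilon> :: real and l :: nat
  assumes "group G" and "finite (carrier G)" and "A \<subseteq> carrier G"
    and "K > 0" and "l \<ge> 1"
    and "prob_G G (setpow G A l) \<le> K * prob_G G (setpow G A (l - 1))"
    and "0 < \<epsilon>" and "\<epsilon> \<le> 1"
  shows "diffset G A \<subseteq> LinBohr G (LSpec G (setpow G A l) \<epsilon>) (2 * \<epsilon> * sqrt (2 * K))"
proof
  interpret group G by fact
  fix z assume "z \<in> diffset G A"
  then obtain a b where ab: "a \<in> A" "b \<in> A" and z: "z = a \<otimes> inv b"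
    by (auto simp: diffset_def)
  then have carrier: "a \<in> carrier G" "b \<in> carrier G" "z \<in> carrier G" using assms(3) by auto
  obtain m where l: "l = Suc m" using \<open>l \<ge> 1\<close> by (cases l) auto
  have "card (carrier G) > 0" using assms(2) carrier_not_empty card_gt_0_iff by blast
  then have card_le: "card (setpow G A (Suc m)) \<le> K * card (setpow G A m)"
    using assms(6) by (simp add: l prob_G_def divide_simps)
  have eps_sq: "\<epsilon>^2 \<le> 2" using power_le_one[of \<epsilon> 2] assms(7,8) by linarith
  have "circ_norm (\<gamma> z) \<le> 2 * \<epsilon> * sqrt (2 * K)" if \<gamma>: "\<gamma> \<in> LSpec G (setpow G A l) \<epsilon>" for \<gamma>
  proof -
    have Lin: "\<gamma> \<in> Lin G" using \<gamma> by (simp add: LSpec_def)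
    have "circ_norm (\<gamma> z) \<le> cmod (\<gamma> a - \<gamma> b)"
      using circ_norm_le_norm_diff_one[OF Lin_norm[OF Lin carrier(3)]]
        Lin_norm_diff_one[OF Lin carrier(1,2)] by (simp add: z)
    also have "\<dots> \<le> 2 * \<epsilon> * sqrt K"
      using LSpec_setpow_norm_diff_le_sqrt[OF assms(2,3) ab \<gamma>[unfolded l] _ eps_sq card_le] assms(7)
      by simp
    also have "\<dots> \<le> 2 * \<epsilon> * sqrt (2 * K)"
      using assms(4,7) by simp
    finally show ?thesis .
  qed
  then show "z \<in> LinBohr G (LSpec G (setpow G A l) \<epsilon>) (2 * \<epsilon> * sqrt (2 * K))"
    using carrier by (simp add: LinBohr_def)
qed

end
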